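(* Let $0<\varepsilon<1$ and $\Omega_\varepsilon=\{\lambda\in\mathbb C : |\mathrm{Re}\,\lambda|\le\varepsilon|\lambda|,\ \mathrm{Im}\,\lambda\le-\tfrac{1-\varepsilon}{2}\}$. Then there exists a constant $d>0$ and, for every $h\in\mathbb N$, a constant $C>0$ such that $$|\partial_\lambda^{\,h}\Gamma_\ell(\lambda)|\le C\,\ell^{d}\,(1+|\lambda|)^{-h-1}\qquad\text{for all }\ell\in\mathbb N^*=\{1,2,\dots\},\ \lambda\in\mathbb C\setminus\Omega_\varepsilon .$$
   Context: Let $m\ge2$ be an even integer and $k\ge1$ an integer, and set $Q=\frac m2+k$. Define $$\omega(r)=\tfrac14\cdot\tfrac m2\,(Q-1)\,\big(\sinh\tfrac r2\big)^{-2}+\tfrac k2\big(\tfrac k2-1\big)(\sinh r)^{-2}\qquad(r>0).$$ This function has an expansion $\omega(r)=\sum_{j\ge1}\omega_j e^{-jr}$ for $r>0$, with coefficients satisfying $\omega_j=O(j)$. The functions $\Gamma_\ell(\lambda)$, for $\ell\in\mathbb N$, are defined by the recurrence $$\Gamma_0=1,\qquad \ell\,(\ell-2i\lambda)\,\Gamma_\ell(\lambda)=\sum_{j=0}^{\ell-1}\omega_{\ell-j}\,\Gamma_j(\lambda)\qquad(\ell\ge1).$$ These are the coefficients in the expansion of the spherical function at infinity on a Damek–Ricci space: the poles of $\Gamma_\ell$ lie at $\lambda=-i\ell'/2$ for $\ell'\ge1$. *)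

theory Defs
  imports "HOL-Analysis.Analysis"
begin

definition Qpar :: "nat \<Rightarrow> nat \<Rightarrow> real" where
  "Qpar m k = real m / 2 + real k"

definition omega :: "nat \<Rightarrow> nat \<Rightarrow> real \<Rightarrow> real" where
  "omega m k r =
     1/4 * (real m / 2) * (Qpar m k - 1) * (1 / (sinh (r/2))\<^sup>2)
     + (real k / 2) * (real k / 2 - 1) * (1 / (sinh r)\<^sup>2)"

text \<open>The coefficients omega_j (j >= 1) of the expansion
  omega(r) = sum_{j>=1} omega_j e^{-jr}, valid for all r > 0.
  We set the (unused) index 0 to 0.\<close>
definition omega_coeff :: "nat \<Rightarrow> nat \<Rightarrow> nat \<Rightarrow> real" where
  "omega_coeff m k = (THE c. c 0 = 0 \<and>
     (\<forall>r>0. (\<lambda>j. c j * exp (- real j * r)) sums omega m k r))"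

function Gamma :: "nat \<Rightarrow> nat \<Rightarrow> nat \<Rightarrow> complex \<Rightarrow> complex" where
  "Gamma m k 0 lam = 1"
| "Gamma m k (Suc l) lam =
     (\<Sum>j<Suc l. complex_of_real (omega_coeff m k (Suc l - j)) * Gamma m k j lam)
     / (of_nat (Suc l) * (of_nat (Suc l) - 2 * \<i> * lam))"
  by pat_completeness auto
termination by (relation "Wellfounded.measure (\<lambda>(m,k,l,lam). l)") auto

definition Omega_eps :: "real \<Rightarrow> complex set" where
  "Omega_eps \<epsilon> = {lam. \<bar>Re lam\<bar> \<le> \<epsilon> * cmod lam \<and> Im lam \<le> - (1 - \<epsilon>) / 2}"

end

theory Submission
  imports Defs "HOL-Complex_Analysis.Cauchy_Integral_Formula"
begin

(* 1. The coefficients omega_j of omega(r) = sum_j omega_j e^(-jr) are computed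
      explicitly from the geometric series (in x = e^(-r)) of 1/sinh^2; by
      uniqueness of power series, omega_coeff agrees with this formula, whence
      |omega_j| <= A j for a constant A.
   2. Outside Omega_eps, the denominators l (l - 2 i lam) of the recursion are
      bounded below both by c l^2 and by c l (1 + |lam|), with c = eps/4; so each
      Gamma_l is holomorphic there.
   3. Differentiating the recursion l (l - 2 i lam) Gamma_l = sum_j omega_(l-j) Gamma_j
      h times by Leibniz's rule gives a recursion for the h-th derivatives whose
      extra term involves only the (h-1)-th derivative of Gamma_l.
   4. A discrete Gronwall-type lemma turns the resulting inequality
      g l <= sum_(j<l) A (l - j) g j / (c l^2) + E l^d / M into g l <= K l^d / M
      once d is large compared with A / c; induction on h gives the theorem.

   The lemmas follow this order. *)

lemma weighted_geometric_sums:
  fixes x :: real assumes "0 < x" "x < 1"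
  shows "(\<lambda>j. real j * x ^ j) sums (x / (1 - x)\<^sup>2)"
proof -
  have "(\<lambda>n. of_nat (Suc n) * x ^ n) sums (1 / (1 - x)^2)"
    using assms by (intro geometric_deriv_sums) auto
  hence "(\<lambda>n. x * (of_nat (Suc n) * x ^ n)) sums (x * (1 / (1 - x)^2))"
    by (rule sums_mult)
  hence "(\<lambda>n. real (Suc n) * x ^ Suc n) sums (x / (1 - x)^2)"
    by (simp add: algebra_simps)
  from sums_Suc[OF this] show ?thesis by simp
qed

lemma weighted_geometric_sums_even:
  fixes x :: real assumes "0 < x" "x < 1"
  shows "(\<lambda>j. if even j then real j / 2 * x ^ j else 0) sums (x\<^sup>2 / (1 - x\<^sup>2)\<^sup>2)"
proof -
  have x2: "0 < x\<^sup>2" "x\<^sup>2 < 1" using assms by (auto simp: power_less_one_iff)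
  have "(\<lambda>i. (\<lambda>j. if even j then real j / 2 * x ^ j else 0) (2 * i))
        = (\<lambda>i. real i * (x\<^sup>2) ^ i)"
    by (auto simp: power_mult)
  with weighted_geometric_sums[OF x2]
  have "(\<lambda>i. (\<lambda>j. if even j then real j / 2 * x ^ j else 0) (2 * i)) sums (x\<^sup>2 / (1 - x\<^sup>2)\<^sup>2)"
    by simp
  thus ?thesis
    by (subst (asm) sums_mono_reindex) (auto simp: strict_mono_def elim!: evenE)
qed

lemma inverse_sinh_half_squared:
  fixes r :: real assumes "r > 0"
  shows "1 / (sinh (r/2))\<^sup>2 = 4 * (exp (-r) / (1 - exp (-r))\<^sup>2)"
proof -
  define y where "y = exp (r/2)"
  have y: "y > 1" using assms by (simp add: y_def)
  have "exp r = y\<^sup>2" by (simp add: y_def power2_eq_square flip: exp_add)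
  hence exp_neg: "exp (-r) = 1/y\<^sup>2" by (simp add: exp_minus field_simps)
  have sinh_eq: "sinh (r/2) = (y - 1/y)/2"
    by (simp add: sinh_def y_def exp_minus inverse_eq_divide)
  show ?thesis using y unfolding sinh_eq exp_neg by (simp add: field_simps power2_eq_square)
qed

lemma inverse_sinh_squared:
  fixes r :: real assumes "r > 0"
  shows "1 / (sinh r)\<^sup>2 = 4 * ((exp (-r))\<^sup>2 / (1 - (exp (-r))\<^sup>2)\<^sup>2)"
proof -
  define y where "y = exp r"
  have y: "y > 1" using assms by (simp add: y_def)
  have exp_neg: "exp (-r) = 1/y" by (simp add: exp_minus y_def inverse_eq_divide)
  have sinh_eq: "sinh r = (y - 1/y)/2" by (simp add: sinh_def y_def exp_neg)
  show ?thesis using y unfolding sinh_eq exp_neg by (simp add: field_simps power2_eq_square)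
qed

text \<open>Uniqueness of real power series: a series summing to zero on \<open>(0,1)\<close> has
  vanishing coefficients (by induction, dividing off the lowest power).\<close>

lemma power_series_zero_on_unit_interval:
  fixes D :: "nat \<Rightarrow> real"
  assumes "\<And>x. 0 < x \<Longrightarrow> x < 1 \<Longrightarrow> (\<lambda>j. D j * x ^ j) sums 0"
  shows "D n = 0"
proof (induction n rule: less_induct)
  case (less n)
  have shifted: "(\<lambda>i. D (i + n) * x ^ i) sums 0" if "0 < x" "x < 1" for x
  proof -
    have "(\<lambda>i. D (i + n) * x ^ (i + n)) sums 0"
      using sums_zero_iff_shift[of n "\<lambda>j. D j * x ^ j" 0] less assms[OF that] by simp
    hence "(\<lambda>i. (D (i + n) * x ^ (i + n)) * (1 / x ^ n)) sums (0 * (1 / x ^ n))"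
      by (rule sums_mult2)
    moreover have "(\<lambda>i. (D (i + n) * x ^ (i + n)) * (1 / x ^ n)) = (\<lambda>i. D (i + n) * x ^ i)"
      using that by (auto simp: power_add)
    ultimately show ?thesis by simp
  qed
  define g where "g y = (\<Sum>i. D (i + n) * y ^ i)" for y :: real
  have "summable (\<lambda>i. D (i + n) * (1/2) ^ i)" using shifted[of "1/2"] sums_summable by auto
  hence "isCont g 0" unfolding g_def by (rule isCont_powser) simp
  hence "(g \<longlongrightarrow> g 0) (at_right 0)"
    by (simp add: isCont_def filterlim_at_split)
  moreover have "eventually (\<lambda>y. g y = 0) (at_right (0::real))"
    unfolding eventually_at_right[of 0 "1::real", simplified]
    by (rule exI[of _ 1]) (auto simp: g_def sums_unique[OF shifted, symmetric])
  ultimately have "((\<lambda>_. 0) \<longlongrightarrow> g 0) (at_right (0::real))"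
    using tendsto_cong[of g "\<lambda>_. 0" "at_right (0::real)" "g 0"] by simp
  hence "g 0 = 0" by (simp add: tendsto_const_iff trivial_limit_at_right_real)
  thus ?case by (simp add: g_def)
qed

text \<open>The explicit coefficients of \<open>\<omega>\<close>: the first summand contributes \<open>j\<close> times a
  constant, the second one only even indices.\<close>

definition omega_series_coeff :: "nat \<Rightarrow> nat \<Rightarrow> nat \<Rightarrow> real" where
  "omega_series_coeff m k j = (real m/2) * (Qpar m k - 1) * real j
     + 4 * ((real k/2) * (real k/2 - 1)) * (if even j then real j / 2 else 0)"

lemma omega_series_coeff_sums:
  assumes "r > 0"
  shows "(\<lambda>j. omega_series_coeff m k j * exp (- real j * r)) sums omega m k r"
proof -
  define x where "x = exp (-r)"
  have x: "0 < x" "x < 1" using assms by (auto simp: x_def)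
  define a b where "a = (real m/2) * (Qpar m k - 1)" and "b = 4 * ((real k/2) * (real k/2 - 1))"
  have "(\<lambda>j. a * (real j * x ^ j) + b * (if even j then real j / 2 * x ^ j else 0))
     sums (a * (x / (1 - x)\<^sup>2) + b * (x\<^sup>2 / (1 - x\<^sup>2)\<^sup>2))"
    by (intro sums_add sums_mult weighted_geometric_sums weighted_geometric_sums_even x)
  moreover have "omega m k r = a * (x / (1 - x)\<^sup>2) + b * (x\<^sup>2 / (1 - x\<^sup>2)\<^sup>2)"
  proof -
    have "x\<^sup>2 < 1" using x by (auto simp: power_less_one_iff)
    hence "1 - x \<noteq> 0" "1 - x\<^sup>2 \<noteq> 0" using x by auto
    thus ?thesis
      unfolding omega_def inverse_sinh_half_squared[OF assms] inverse_sinh_squared[OF assms]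
        x_def[symmetric] a_def b_def
      by (simp add: field_simps)
  qed
  moreover have exp_eq: "exp (- real j * r) = x ^ j" for j
    by (simp add: x_def flip: exp_of_nat_mult)
  have "(\<lambda>j. omega_series_coeff m k j * exp (- real j * r))
       = (\<lambda>j. a * (real j * x ^ j) + b * (if even j then real j / 2 * x ^ j else 0))"
    by (rule ext) (simp only: exp_eq omega_series_coeff_def a_def b_def, simp add: algebra_simps)
  ultimately show ?thesis by simp
qed

lemma omega_coeff_eq: "omega_coeff m k = omega_series_coeff m k"
  unfolding omega_coeff_def
proof (rule the_equality)
  show "omega_series_coeff m k 0 = 0 \<and>
        (\<forall>r>0. (\<lambda>j. omega_series_coeff m k j * exp (- real j * r)) sums omega m k r)"
    using omega_series_coeff_sums by (simp add: omega_series_coeff_def)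
next
  fix c assume c: "c 0 = 0 \<and> (\<forall>r>0. (\<lambda>j. c j * exp (- real j * r)) sums omega m k r)"
  have "c n - omega_series_coeff m k n = 0" for n
  proof (rule power_series_zero_on_unit_interval)
    fix x :: real assume x: "0 < x" "x < 1"
    define r where "r = - ln x"
    have r: "r > 0" using x by (simp add: r_def)
    have exp_eq: "exp (- real j * r) = x ^ j" for j
      using exp_of_nat_mult[of j "ln x"] x by (simp add: r_def)
    have "(\<lambda>j. c j * exp (- real j * r) - omega_series_coeff m k j * exp (- real j * r))
          sums (omega m k r - omega m k r)"
      using c r omega_series_coeff_sums[OF r] by (intro sums_diff) auto
    thus "(\<lambda>j. (c j - omega_series_coeff m k j) * x ^ j) sums 0"
      by (simp only: exp_eq left_diff_distrib) simp
  qed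
  thus "c = omega_series_coeff m k" by auto
qed

lemma omega_coeff_linear_bound: "\<exists>A\<ge>0. \<forall>j. \<bar>omega_coeff m k j\<bar> \<le> A * real j"
proof (intro exI conjI allI)
  define a b where "a = (real m/2) * (Qpar m k - 1)" and "b = 4 * ((real k/2) * (real k/2 - 1))"
  show "\<bar>a\<bar> + \<bar>b\<bar> \<ge> 0" by simp
  fix j
  have "\<bar>omega_coeff m k j\<bar> \<le> \<bar>a\<bar> * real j + \<bar>b\<bar> * (if even j then real j / 2 else 0)"
    unfolding omega_coeff_eq omega_series_coeff_def a_def[symmetric] b_def[symmetric]
    by (rule order.trans[OF abs_triangle_ineq]) (simp add: abs_mult)
  also have "\<dots> \<le> \<bar>a\<bar> * real j + \<bar>b\<bar> * real j"
    by (intro add_left_mono mult_left_mono) auto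
  finally show "\<bar>omega_coeff m k j\<bar> \<le> (\<bar>a\<bar> + \<bar>b\<bar>) * real j" by (simp add: algebra_simps)
qed


text \<open>Lower bounds for the factor \<open>L - 2i\<lambda>\<close> of the recursion's denominators
  outside \<open>\<Omega>\<^sub>\<epsilon>\<close>: either \<open>|Re \<lambda>| > \<epsilon>|\<lambda>|\<close>, which keeps \<open>L - 2i\<lambda>\<close> away from the
  real axis, or \<open>Im \<lambda> > -(1-\<epsilon>)/2\<close>, which keeps its real part \<open>\<ge> \<epsilon> L\<close>.\<close>

lemma open_compl_Omega_eps: "open (- Omega_eps e)"
proof -
  have "closed (Omega_eps e)" unfolding Omega_eps_def
    by (intro closed_Collect_conj closed_Collect_le continuous_intros)
  thus ?thesis by (simp add: open_Compl)
qed

lemma denominator_ge_index: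
  fixes lam :: complex and L e :: real
  assumes e: "0 < e" "e < 1" and lam: "lam \<notin> Omega_eps e" and L: "L \<ge> 1"
  shows "(e/2) * L \<le> cmod (of_real L - 2 * \<i> * lam)"
proof -
  define X where "X = cmod (of_real L - 2 * \<i> * lam)"
  have X_Re: "X \<ge> L + 2 * Im lam"
    using abs_Re_le_cmod[of "of_real L - 2 * \<i> * lam"] X_def by simp
  have X_Im: "X \<ge> 2 * \<bar>Re lam\<bar>"
    using abs_Im_le_cmod[of "of_real L - 2 * \<i> * lam"] X_def by simp
  have "cmod (of_real L) \<le> X + cmod (2 * \<i> * lam)" unfolding X_def
    using norm_triangle_ineq[of "of_real L - 2 * \<i> * lam" "2 * \<i> * lam"] by simp
  hence X_norm: "X \<ge> L - 2 * cmod lam" using L by (simp add: norm_mult)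
  from lam have "\<bar>Re lam\<bar> > e * cmod lam \<or> Im lam > - (1 - e) / 2"
    unfolding Omega_eps_def by auto
  thus ?thesis
  proof
    assume Re_large: "\<bar>Re lam\<bar> > e * cmod lam"
    show ?thesis
    proof (cases "cmod lam \<le> L/4")
      case True
      have "e * L \<le> 1 * L" using e L by (intro mult_right_mono) auto
      thus ?thesis using True X_norm unfolding X_def[symmetric] by linarith
    next
      case False
      hence "e * L / 2 \<le> 2 * e * cmod lam" using e by (auto intro: mult_left_mono)
      thus ?thesis using Re_large X_Im unfolding X_def[symmetric] by linarith
    qed
  next
    assume Im_large: "Im lam > - (1 - e) / 2"
    have "(1 - e) * (L - 1) \<ge> 0" using e L by auto
    hence "e * L \<le> L - 1 + e" by (simp add: algebra_simps)
    moreover have "e / 2 * L \<le> e * L" using e L by (simp add: mult_right_mono)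
    ultimately show ?thesis using X_Re Im_large unfolding X_def[symmetric] by (simp add: field_simps)
  qed
qed

lemma denominator_ge_norm:
  fixes lam :: complex and L e :: real
  assumes e: "0 < e" "e < 1" and lam: "lam \<notin> Omega_eps e" and L: "L \<ge> 1"
  shows "(e/4) * (1 + cmod lam) \<le> cmod (of_real L - 2 * \<i> * lam)"
proof -
  define X where "X = cmod (of_real L - 2 * \<i> * lam)"
  define c where "c = e / 2"
  have c: "0 < c" "c \<le> 1" using e by (auto simp: c_def)
  have X_L: "c * L \<le> X" using denominator_ge_index[OF assms] by (simp add: X_def c_def)
  have "cmod (2 * \<i> * lam) \<le> X + cmod (of_real L :: complex)" unfolding X_def
    using norm_triangle_ineq[of "2 * \<i> * lam - of_real L" "of_real L"]
      norm_minus_commute[of "2 * \<i> * lam" "of_real L"] by simp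
  hence "2 * cmod lam \<le> X + L" using L by (simp add: norm_mult)
  hence "c * (2 * cmod lam) \<le> c * X + c * L" using c by (metis distrib_left mult_left_mono less_imp_le)
  also have "\<dots> \<le> X + X" using c X_L by (intro add_mono) (auto simp: X_def mult_left_le_one_le)
  finally have "c * cmod lam \<le> X" by simp
  moreover have "c \<le> c * L" using c L by simp
  ultimately have "c * (1 + cmod lam) \<le> 2 * X" using X_L by (simp add: algebra_simps)
  thus ?thesis unfolding X_def c_def by simp
qed

lemma recursion_denominator_bounds:
  fixes z :: complex and L :: nat
  assumes e: "0 < e" "e < 1" and z: "z \<notin> Omega_eps e" and L: "L \<ge> 1"
  shows "e/4 * real L ^ 2 \<le> cmod (of_nat L * (of_nat L - 2 * \<i> * z))"
    and "e/4 * real L * (1 + cmod z) \<le> cmod (of_nat L * (of_nat L - 2 * \<i> * z))"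
proof -
  define X where "X = cmod (of_real (real L) - 2 * \<i> * z)"
  have norm_eq: "cmod (of_nat L * (of_nat L - 2 * \<i> * z)) = real L * X"
    by (simp add: X_def norm_mult)
  have "e/4 * real L \<le> e/2 * real L" using e by simp
  also have "\<dots> \<le> X" using denominator_ge_index[OF e z, of "real L"] L by (simp add: X_def)
  finally have "real L * (e/4 * real L) \<le> real L * X" by (rule mult_left_mono) simp
  thus "e/4 * real L ^ 2 \<le> cmod (of_nat L * (of_nat L - 2 * \<i> * z))"
    unfolding norm_eq by (simp add: power2_eq_square algebra_simps)
  have "real L * (e/4 * (1 + cmod z)) \<le> real L * X"
    using denominator_ge_norm[OF e z, of "real L"] L by (intro mult_left_mono) (auto simp: X_def)
  thus "e/4 * real L * (1 + cmod z) \<le> cmod (of_nat L * (of_nat L - 2 * \<i> * z))"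
    unfolding norm_eq by (simp add: algebra_simps)
qed

lemma recursion_denominator_nonzero:
  assumes "0 < e" "e < 1" "z \<notin> Omega_eps e" "L \<ge> 1"
  shows "of_nat L * (of_nat L - 2 * \<i> * z) \<noteq> 0"
proof -
  have "0 < e/4 * real L ^ 2" using assms by simp
  also have "\<dots> \<le> cmod (of_nat L * (of_nat L - 2 * \<i> * z))"
    by (rule recursion_denominator_bounds(1)[OF assms])
  finally show ?thesis unfolding zero_less_norm_iff .
qed

lemma Gamma_holomorphic:
  assumes "0 < e" "e < 1"
  shows "Gamma m k l holomorphic_on - Omega_eps e"
proof (induction l rule: less_induct)
  case (less l)
  show ?case
  proof (cases l)
    case 0
    have "Gamma m k 0 = (\<lambda>_. 1)" by auto
    thus ?thesis using 0 by simp
  next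
    case (Suc n)
    have "Gamma m k (Suc n) = (\<lambda>z. (\<Sum>j<Suc n. complex_of_real (omega_coeff m k (Suc n - j)) * Gamma m k j z)
                                 / (of_nat (Suc n) * (of_nat (Suc n) - 2 * \<i> * z)))"
      by auto
    moreover have "\<dots> holomorphic_on - Omega_eps e"
    proof (rule holomorphic_on_divide)
      show "(\<lambda>z. \<Sum>j<Suc n. complex_of_real (omega_coeff m k (Suc n - j)) * Gamma m k j z)
            holomorphic_on - Omega_eps e"
        using less Suc by (intro holomorphic_intros) auto
      show "(\<lambda>z. of_nat (Suc n) * (of_nat (Suc n) - 2 * \<i> * z)) holomorphic_on - Omega_eps e"
        by (intro holomorphic_intros)
      show "of_nat (Suc n) * (of_nat (Suc n) - 2 * \<i> * z) \<noteq> 0" if "z \<in> - Omega_eps e" for z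
        using recursion_denominator_nonzero[OF assms, of z "Suc n"] that by simp
    qed
    ultimately show ?thesis using Suc by simp
  qed
qed


lemma higher_deriv_sum:
  fixes f :: "'i \<Rightarrow> complex \<Rightarrow> complex"
  assumes "finite I" "\<And>i. i \<in> I \<Longrightarrow> f i holomorphic_on S" "open S" "z \<in> S"
  shows "(deriv ^^ n) (\<lambda>w. \<Sum>i\<in>I. f i w) z = (\<Sum>i\<in>I. (deriv ^^ n) (f i) z)"
  using assms(1,2)
proof (induction I rule: finite_induct)
  case (insert x F)
  have "(deriv ^^ n) (\<lambda>w. f x w + (\<Sum>i\<in>F. f i w)) z
        = (deriv ^^ n) (f x) z + (deriv ^^ n) (\<lambda>w. \<Sum>i\<in>F. f i w) z"
    using insert.prems assms(3,4) by (intro higher_deriv_add) (auto intro!: holomorphic_intros)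
  thus ?case using insert by simp
qed simp

text \<open>Leibniz's rule for a product with a linear polynomial: only the first two
  terms survive.\<close>

lemma higher_deriv_linear_factor:
  fixes a b z :: complex
  assumes "f holomorphic_on S" "open S" "z \<in> S"
  shows "(deriv ^^ h) (\<lambda>w. (a + b * w) * f w) z
         = (a + b * z) * (deriv ^^ h) f z + of_nat h * b * (deriv ^^ (h - 1)) f z"
proof -
  have linear: "(deriv ^^ i) (\<lambda>w. a + b * w) z
                = (if i = 0 then a + b * z else if i = 1 then b else 0)" for i
    by (subst higher_deriv_add[of _ UNIV]) (auto intro!: holomorphic_intros)
  have "(deriv ^^ h) (\<lambda>w. (a + b * w) * f w) z
        = (\<Sum>i = 0..h. of_nat (h choose i) * (deriv ^^ i) (\<lambda>w. a + b * w) z * (deriv ^^ (h - i)) f z)"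
    using assms by (intro higher_deriv_mult) (auto intro!: holomorphic_intros)
  also have "\<dots> = (\<Sum>i\<in>{0, 1} \<inter> {0..h}. of_nat (h choose i) * (deriv ^^ i) (\<lambda>w. a + b * w) z
                                          * (deriv ^^ (h - i)) f z)"
    by (rule sum.mono_neutral_right) (auto simp: linear)
  also have "\<dots> = (a + b * z) * (deriv ^^ h) f z + of_nat h * b * (deriv ^^ (h - 1)) f z"
  proof -
    have "{0, 1} \<inter> {0..h} = (if h = 0 then {0} else {0, 1::nat})" by auto
    thus ?thesis by (simp add: linear)
  qed
  finally show ?thesis .
qed

lemma Gamma_higher_deriv_recursion:
  fixes z :: complex
  assumes e: "0 < e" "e < 1" and z: "z \<notin> Omega_eps e" and L: "L = Suc l"
  shows "of_nat L * (of_nat L - 2 * \<i> * z) * (deriv ^^ h) (Gamma m k L) z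
           - of_nat h * (2 * \<i> * of_nat L) * (deriv ^^ (h - 1)) (Gamma m k L) z
         = (\<Sum>j<L. complex_of_real (omega_coeff m k (L - j)) * (deriv ^^ h) (Gamma m k j) z)"
proof -
  define U where "U = - Omega_eps e"
  have U: "open U" "z \<in> U" using open_compl_Omega_eps z by (auto simp: U_def)
  have holo: "Gamma m k j holomorphic_on U" for j
    using Gamma_holomorphic[OF e] by (simp add: U_def)
  define a b :: complex where "a = of_nat L * of_nat L" and "b = - 2 * \<i> * of_nat L"
  define S where "S = (\<lambda>w. \<Sum>j<L. complex_of_real (omega_coeff m k (L - j)) * Gamma m k j w)"
  have recursion: "(a + b * w) * Gamma m k L w = S w" if "w \<in> U" for w
  proof -
    have "a + b * w = of_nat L * (of_nat L - 2 * \<i> * w)" by (simp add: a_def b_def algebra_simps)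
    moreover have "\<dots> \<noteq> 0"
      using recursion_denominator_nonzero[OF e, of w L] that L by (simp add: U_def)
    ultimately show ?thesis by (simp add: L S_def)
  qed
  have "of_nat L * (of_nat L - 2 * \<i> * z) * (deriv ^^ h) (Gamma m k L) z
          - of_nat h * (2 * \<i> * of_nat L) * (deriv ^^ (h - 1)) (Gamma m k L) z
        = (a + b * z) * (deriv ^^ h) (Gamma m k L) z + of_nat h * b * (deriv ^^ (h - 1)) (Gamma m k L) z"
    by (simp add: a_def b_def algebra_simps)
  also have "\<dots> = (deriv ^^ h) (\<lambda>w. (a + b * w) * Gamma m k L w) z"
    by (rule higher_deriv_linear_factor[symmetric, OF holo U])
  also have "\<dots> = (deriv ^^ h) S z"
    using U holo recursion unfolding S_def
    by (intro higher_deriv_transform_within_open[of _ U]) (auto intro!: holomorphic_intros)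
  also have "\<dots> = (\<Sum>j<L. complex_of_real (omega_coeff m k (L - j)) * (deriv ^^ h) (Gamma m k j) z)"
    unfolding S_def using U holo
    by (subst higher_deriv_sum[where S = U])
       (auto intro!: holomorphic_intros simp: higher_deriv_cmult[OF holo U(2,1)])
  finally show ?thesis .
qed

lemma Gamma_higher_deriv_norm_recursion:
  fixes z :: complex
  assumes e: "0 < e" "e < 1" and z: "z \<notin> Omega_eps e" and L: "L \<ge> 1"
    and omega: "\<And>j. \<bar>omega_coeff m k j\<bar> \<le> A * real j"
  shows "cmod (of_nat L * (of_nat L - 2 * \<i> * z)) * cmod ((deriv ^^ h) (Gamma m k L) z)
         \<le> (\<Sum>j<L. A * (real L - real j) * cmod ((deriv ^^ h) (Gamma m k j) z))
            + 2 * real h * real L * cmod ((deriv ^^ (h - 1)) (Gamma m k L) z)"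
proof -
  obtain l where l: "L = Suc l" using L by (cases L) auto
  define T where "T = of_nat h * (2 * \<i> * of_nat L) * (deriv ^^ (h - 1)) (Gamma m k L) z"
  define R where "R = (\<Sum>j<L. complex_of_real (omega_coeff m k (L - j)) * (deriv ^^ h) (Gamma m k j) z)"
  have "of_nat L * (of_nat L - 2 * \<i> * z) * (deriv ^^ h) (Gamma m k L) z = R + T"
    using Gamma_higher_deriv_recursion[OF e z l, of h m k] unfolding R_def T_def
    by (simp only: diff_eq_eq)
  hence "cmod (of_nat L * (of_nat L - 2 * \<i> * z)) * cmod ((deriv ^^ h) (Gamma m k L) z)
         \<le> cmod R + cmod T"
    by (metis norm_mult norm_triangle_ineq)
  also have "cmod R \<le> (\<Sum>j<L. A * (real L - real j) * cmod ((deriv ^^ h) (Gamma m k j) z))"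
    unfolding R_def
  proof (rule order.trans[OF norm_sum sum_mono])
    fix j assume "j \<in> {..<L}"
    hence "\<bar>omega_coeff m k (L - j)\<bar> \<le> A * (real L - real j)"
      using omega[of "L - j"] by (simp add: of_nat_diff)
    thus "cmod (complex_of_real (omega_coeff m k (L - j)) * (deriv ^^ h) (Gamma m k j) z)
          \<le> A * (real L - real j) * cmod ((deriv ^^ h) (Gamma m k j) z)"
      by (simp add: norm_mult mult_right_mono)
  qed
  also have "cmod T = 2 * real h * real L * cmod ((deriv ^^ (h - 1)) (Gamma m k L) z)"
    by (simp add: T_def norm_mult)
  finally show ?thesis by simp
qed

text \<open>If \<open>g L\<close> is bounded by a weighted average of
  its earlier values, with weights \<open>A (L - j) / (c L\<^sup>2)\<close>, plus an inhomogeneity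
  \<open>E L\<^sup>d / M\<close>, then \<open>g L = O(L\<^sup>d / M)\<close> as soon as \<open>2A \<le> c (d + 1)\<close>: summing \<open>j\<^sup>d\<close>
  over \<open>j < L\<close> gains the factor \<open>L / (d + 1)\<close> that absorbs the weights.\<close>

lemma power_Suc_difference_ge:
  fixes x :: real assumes "x \<ge> 0"
  shows "real (Suc d) * x ^ d \<le> (x + 1) ^ Suc d - x ^ Suc d"
proof (induction d)
  case (Suc d)
  have "(x + 1) * (x ^ Suc d + real (Suc d) * x ^ d) \<le> (x + 1) * (x + 1) ^ Suc d"
    using Suc assms by (intro mult_left_mono) auto
  moreover have "(x + 1) * (x ^ Suc d + real (Suc d) * x ^ d)
                 = x ^ Suc (Suc d) + real (Suc (Suc d)) * x ^ Suc d + real (Suc d) * x ^ d"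
    by (simp add: algebra_simps)
  moreover have "real (Suc d) * x ^ d \<ge> 0" using assms by simp
  ultimately show ?case by simp
qed simp

lemma sum_powers_le: "(\<Sum>j<L. real j ^ d) \<le> real L ^ Suc d / real (Suc d)"
proof -
  have "(\<Sum>j<L. real (Suc d) * real j ^ d) \<le> (\<Sum>j<L. (real j + 1) ^ Suc d - real j ^ Suc d)"
    by (intro sum_mono power_Suc_difference_ge) auto
  also have "\<dots> = (\<Sum>j<L. real (Suc j) ^ Suc d - real j ^ Suc d)" by (simp add: add.commute)
  also have "\<dots> = real L ^ Suc d" by (subst sum_lessThan_telescope) simp
  finally have "real (Suc d) * (\<Sum>j<L. real j ^ d) \<le> real L ^ Suc d" by (simp add: sum_distrib_left)
  thus ?thesis by (simp add: field_simps)
qed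

lemma discrete_gronwall_polynomial:
  fixes g :: "nat \<Rightarrow> real" and A c E M :: real and d :: nat
  assumes A: "A \<ge> 0" and c: "c > 0" and M: "M > 0" and E: "E \<ge> 0"
    and dA: "2 * A \<le> c * real (Suc d)"
    and rec: "\<And>L. L \<ge> 1 \<Longrightarrow>
      g L \<le> (\<Sum>j\<in>{1..<L}. A * (real L - real j) * g j) / (c * real L ^ 2) + E * real L ^ d / M"
  shows "L \<ge> 1 \<Longrightarrow> g L \<le> (2 * E + 1) * real L ^ d / M"
proof (induction L rule: less_induct)
  case (less L)
  define K where "K = 2 * E + 1"
  have K: "K > 0" using E by (simp add: K_def)
  have L: "real L \<ge> 1" using less.prems by simp
  have "(\<Sum>j\<in>{1..<L}. A * (real L - real j) * g j) \<le> (\<Sum>j\<in>{1..<L}. A * real L * (K * real j ^ d / M))"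
  proof (rule sum_mono)
    fix j assume j: "j \<in> {1..<L}"
    have "g j \<le> K * real j ^ d / M" using less.IH[of j] j by (auto simp: K_def)
    hence "A * (real L - real j) * g j \<le> A * (real L - real j) * (K * real j ^ d / M)"
      using j A by (intro mult_left_mono) auto
    also have "\<dots> \<le> A * real L * (K * real j ^ d / M)"
      using A K M by (intro mult_right_mono mult_left_mono) auto
    finally show "A * (real L - real j) * g j \<le> A * real L * (K * real j ^ d / M)" .
  qed
  also have "\<dots> = A * real L * K / M * (\<Sum>j\<in>{1..<L}. real j ^ d)"
    by (simp add: sum_distrib_left mult_ac)
  also have "\<dots> \<le> A * real L * K / M * (\<Sum>j<L. real j ^ d)"
    using A K M by (intro mult_left_mono sum_mono2) auto
  also have "\<dots> \<le> A * real L * K / M * (real L ^ Suc d / real (Suc d))"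
    using A K M by (intro mult_left_mono sum_powers_le) auto
  also have "\<dots> = (A / (c * real (Suc d))) * (K * real L ^ d / M) * (c * real L ^ 2)"
    using c M by (simp add: field_simps power2_eq_square del: of_nat_Suc)
  finally have "(\<Sum>j\<in>{1..<L}. A * (real L - real j) * g j) / (c * real L ^ 2)
                \<le> (A / (c * real (Suc d))) * (K * real L ^ d / M)"
    using c L by (simp add: pos_divide_le_eq)
  also have "\<dots> \<le> (1/2) * (K * real L ^ d / M)"
  proof (rule mult_right_mono)
    have "c * real (Suc d) > 0" using c by simp
    thus "A / (c * real (Suc d)) \<le> 1/2" using dA by (simp add: pos_divide_le_eq)
  qed (use K M in auto)
  finally have "g L \<le> (1/2) * (K * real L ^ d / M) + E * real L ^ d / M"
    using rec[OF less.prems] by linarith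
  also have "\<dots> = (K/2 + E) * (real L ^ d / M)" using M by (simp add: field_simps)
  also have "\<dots> \<le> K * (real L ^ d / M)" using M E by (intro mult_right_mono) (auto simp: K_def)
  finally show ?case by (simp add: K_def)
qed

lemma Gamma_zero_higher_deriv: "(deriv ^^ h) (Gamma m k 0) z = (if h = 0 then 1 else 0)"
proof -
  have "Gamma m k 0 = (\<lambda>_. 1)" by auto
  thus ?thesis by simp
qed

lemma divide_by_denominator_gain:
  fixes c L N P x :: real
  assumes "0 < c" "1 \<le> L" "1 \<le> N" "0 \<le> x" "c * L * N \<le> P"
  shows "L * x / P \<le> x / (c * N)"
proof -
  have pos: "0 < c * L * N" using assms by (intro mult_pos_pos) auto
  hence P: "0 < P" using assms(5) by linarith
  have "L * x / P \<le> L * x / (c * L * N)"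
    by (rule divide_left_mono) (use assms pos P in auto)
  also have "\<dots> = x / (c * N)" using assms(2) by simp
  finally show ?thesis .
qed

text \<open>The term \<open>j = 0\<close> only contributes when
  \<open>h = 0\<close>, and the term involving \<open>\<Gamma>\<^sub>L\<^sup>(\<^sup>h\<^sup>-\<^sup>1\<^sup>)\<close> is controlled by the bound for \<open>h - 1\<close>;
  both gain a factor \<open>1/(1 + |z|)\<close> from the denominator bound \<open>c L (1 + |z|)\<close>.\<close>

lemma Gamma_higher_deriv_step_estimate:
  fixes z :: complex
  assumes e: "0 < e" "e < 1" and z: "z \<notin> Omega_eps e" and L: "L \<ge> 1"
    and A: "A \<ge> 0" and omega: "\<And>j. \<bar>omega_coeff m k j\<bar> \<le> A * real j" and K': "K' \<ge> 0"
    and prev: "h > 0 \<Longrightarrow> cmod ((deriv ^^ (h - 1)) (Gamma m k L) z) \<le> K' * real L ^ d / (1 + cmod z) ^ h"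
  defines "g j \<equiv> cmod ((deriv ^^ h) (Gamma m k j) z)" and "c \<equiv> e / 4"
    and "M \<equiv> (1 + cmod z) ^ Suc h"
  shows "g L \<le> (\<Sum>j\<in>{1..<L}. A * (real L - real j) * g j) / (c * real L ^ 2)
                + (A / c + 2 * real h * K' / c) * real L ^ d / M"
proof -
  define N where "N = 1 + cmod z"
  have N: "N \<ge> 1" and M: "M = N * N ^ h" by (simp_all add: N_def M_def)
  have c: "c > 0" and Lr: "real L \<ge> 1" using e L by (simp_all add: c_def)
  define P where "P = cmod (of_nat L * (of_nat L - 2 * \<i> * z))"
  have P_L: "c * real L ^ 2 \<le> P" and P_N: "c * real L * N \<le> P"
    using recursion_denominator_bounds[OF e z L] by (simp_all add: P_def c_def N_def)
  have P: "P > 0" using P_L c Lr by (smt (verit) mult_pos_pos zero_less_power)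
  define Rs where "Rs = (\<Sum>j\<in>{1..<L}. A * (real L - real j) * g j)"
  define G' where "G' = cmod ((deriv ^^ (h - 1)) (Gamma m k L) z)"
  have g0: "g 0 = (if h = 0 then 1 else 0)" by (simp add: g_def Gamma_zero_higher_deriv)
  have "P * g L \<le> (\<Sum>j<L. A * (real L - real j) * g j) + 2 * real h * real L * G'"
    using Gamma_higher_deriv_norm_recursion[OF e z L omega, of h] by (simp add: P_def g_def G'_def)
  also have "(\<Sum>j<L. A * (real L - real j) * g j) = real L * (A * g 0) + Rs"
    using L by (simp add: Rs_def lessThan_atLeast0 sum.atLeast_Suc_lessThan)
  finally have "g L \<le> (real L * (A * g 0) + Rs + real L * (2 * real h * G')) / P"
    using P by (simp add: pos_le_divide_eq algebra_simps)
  hence "g L \<le> real L * (A * g 0) / P + Rs / P + real L * (2 * real h * G') / P"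
    by (simp add: add_divide_distrib)
  moreover have "real L * (A * g 0) / P \<le> (A / c) * real L ^ d / M"
  proof -
    have "real L * (A * g 0) / P \<le> A * g 0 / (c * N)"
      using A g0 c Lr N P_N by (intro divide_by_denominator_gain) auto
    also have "\<dots> \<le> (A / c) * real L ^ d / M"
      using A c N one_le_power[OF Lr, of d]
      by (cases "h = 0") (auto simp: g0 M mult_le_cancel_left1 intro!: divide_right_mono)
    finally show ?thesis .
  qed
  moreover have "Rs / P \<le> Rs / (c * real L ^ 2)"
  proof (rule divide_left_mono)
    show "Rs \<ge> 0" unfolding Rs_def g_def using A by (intro sum_nonneg mult_nonneg_nonneg) auto
  qed (use P_L P c Lr in auto)
  moreover have "real L * (2 * real h * G') / P \<le> (2 * real h * K' / c) * real L ^ d / M"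
  proof (cases "h = 0")
    case False
    have "real L * (2 * real h * G') / P \<le> 2 * real h * G' / (c * N)"
      using c Lr N P_N by (intro divide_by_denominator_gain) (auto simp: G'_def)
    also have "\<dots> \<le> 2 * real h * (K' * real L ^ d / N ^ h) / (c * N)"
      using prev False c N by (intro divide_right_mono mult_left_mono) (auto simp: G'_def N_def)
    also have "\<dots> = (2 * real h * K' / c) * real L ^ d / M" by (simp add: M field_simps)
    finally show ?thesis .
  qed simp
  moreover have "(A / c + 2 * real h * K' / c) * real L ^ d / M
                 = (A / c) * real L ^ d / M + (2 * real h * K' / c) * real L ^ d / M"
    by (simp add: add_divide_distrib distrib_right)
  ultimately show ?thesis unfolding Rs_def by linarith
qed

lemma Gamma_higher_deriv_bound_step:
  assumes e: "0 < e" "e < 1" and A: "A \<ge> 0" and omega: "\<And>j. \<bar>omega_coeff m k j\<bar> \<le> A * real j"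
    and dA: "2 * A \<le> e / 4 * real (Suc d)" and K': "K' \<ge> 0"
    and prev: "\<And>L z. h > 0 \<Longrightarrow> L \<ge> 1 \<Longrightarrow> z \<notin> Omega_eps e \<Longrightarrow>
       cmod ((deriv ^^ (h - 1)) (Gamma m k L) z) \<le> K' * real L ^ d / (1 + cmod z) ^ h"
  shows "\<exists>K>0. \<forall>L z. L \<ge> 1 \<longrightarrow> z \<notin> Omega_eps e \<longrightarrow>
           cmod ((deriv ^^ h) (Gamma m k L) z) \<le> K * real L ^ d / (1 + cmod z) ^ Suc h"
proof -
  define E where "E = A / (e/4) + 2 * real h * K' / (e/4)"
  have E: "E \<ge> 0" using A K' e by (simp add: E_def)
  have "cmod ((deriv ^^ h) (Gamma m k L) z) \<le> (2 * E + 1) * real L ^ d / (1 + cmod z) ^ Suc h"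
    if "L \<ge> 1" "z \<notin> Omega_eps e" for L z
  proof (rule discrete_gronwall_polynomial[where g = "\<lambda>j. cmod ((deriv ^^ h) (Gamma m k j) z)"
        and c = "e/4" and M = "(1 + cmod z) ^ Suc h", OF A _ _ E dA])
    show "e/4 > 0" "(1 + cmod z) ^ Suc h > 0" using e by (simp_all add: add_pos_nonneg)
    show "L \<ge> 1" by fact
    show "cmod ((deriv ^^ h) (Gamma m k L') z)
          \<le> (\<Sum>j\<in>{1..<L'}. A * (real L' - real j) * cmod ((deriv ^^ h) (Gamma m k j) z)) / (e/4 * real L' ^ 2)
             + E * real L' ^ d / (1 + cmod z) ^ Suc h" if "L' \<ge> 1" for L'
      using Gamma_higher_deriv_step_estimate[OF e \<open>z \<notin> Omega_eps e\<close> that A omega K'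
          prev[OF _ that \<open>z \<notin> Omega_eps e\<close>]]
      by (simp add: E_def)
  qed
  thus ?thesis using E by (intro exI[of _ "2 * E + 1"]) auto
qed

lemma Gamma_higher_deriv_bounds:
  assumes e: "0 < e" "e < 1" and A: "A \<ge> 0" and omega: "\<And>j. \<bar>omega_coeff m k j\<bar> \<le> A * real j"
    and dA: "2 * A \<le> e / 4 * real (Suc d)"
  shows "\<exists>K>0. \<forall>L z. L \<ge> 1 \<longrightarrow> z \<notin> Omega_eps e \<longrightarrow>
           cmod ((deriv ^^ h) (Gamma m k L) z) \<le> K * real L ^ d / (1 + cmod z) ^ Suc h"
proof (induction h)
  case 0
  show ?case by (rule Gamma_higher_deriv_bound_step[OF e A omega dA order_refl]) auto
next
  case (Suc h)
  then obtain K where "K > 0" "\<forall>L z. L \<ge> 1 \<longrightarrow> z \<notin> Omega_eps e \<longrightarrow>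
      cmod ((deriv ^^ h) (Gamma m k L) z) \<le> K * real L ^ d / (1 + cmod z) ^ Suc h"
    by blast
  thus ?case by (intro Gamma_higher_deriv_bound_step[OF e A omega dA, of K]) auto
qed

lemma power_bound_as_powr:
  fixes x :: real assumes "x \<ge> 0" "l \<ge> 1"
  shows "real l ^ d / (1 + x) ^ Suc h = real l powr real d * (1 + x) powr (- real h - 1)"
proof -
  have "- real h - 1 = - real (Suc h)" by simp
  hence "(1 + x) powr (- real h - 1) = (1 + x) powr (- real (Suc h))" by (rule arg_cong)
  also have "\<dots> = inverse ((1 + x) ^ Suc h)"
    using assms by (simp only: powr_minus powr_realpow add_pos_nonneg zero_less_one)
  finally show ?thesis using assms by (simp add: powr_realpow divide_inverse)
qed

lemma Gamma_higher_deriv_bounds_powr: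
  assumes e: "0 < e" "e < 1" and A: "A \<ge> 0" and omega: "\<And>j. \<bar>omega_coeff m k j\<bar> \<le> A * real j"
    and dA: "2 * A \<le> e / 4 * real (Suc d)"
  shows "\<exists>C>0. \<forall>l lam. l \<ge> 1 \<longrightarrow> lam \<notin> Omega_eps e \<longrightarrow>
           cmod ((deriv ^^ h) (Gamma m k l) lam) \<le> C * real l powr real d * (1 + cmod lam) powr (- real h - 1)"
proof -
  obtain K where K: "K > 0" and bound: "\<And>l lam. l \<ge> 1 \<Longrightarrow> lam \<notin> Omega_eps e \<Longrightarrow>
      cmod ((deriv ^^ h) (Gamma m k l) lam) \<le> K * real l ^ d / (1 + cmod lam) ^ Suc h"
    using Gamma_higher_deriv_bounds[OF e A omega dA, of h] by blast
  show ?thesis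
  proof (intro exI[of _ K] conjI allI impI)
    fix l :: nat and lam :: complex assume l: "1 \<le> l" and lam: "lam \<notin> Omega_eps e"
    have "cmod ((deriv ^^ h) (Gamma m k l) lam) \<le> K * (real l ^ d / (1 + cmod lam) ^ Suc h)"
      using bound[OF l lam] by simp
    also have "\<dots> = K * (real l powr real d * (1 + cmod lam) powr (- real h - 1))"
      by (simp only: power_bound_as_powr[OF norm_ge_zero l])
    finally show "cmod ((deriv ^^ h) (Gamma m k l) lam)
                  \<le> K * real l powr real d * (1 + cmod lam) powr (- real h - 1)"
      by (simp only: mult.assoc)
  qed (rule K)
qed

theorem lemma2p1:
  fixes m k :: nat and \<epsilon> :: real
  assumes "even m" and "m \<ge> 2" and "k \<ge> 1"
    and "0 < \<epsilon>" and "\<epsilon> < 1"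
  shows "\<exists>d>0. \<forall>h::nat. \<exists>C>0. \<forall>l::nat. \<forall>lam::complex.
           l \<ge> 1 \<longrightarrow> lam \<notin> Omega_eps \<epsilon> \<longrightarrow>
           cmod ((deriv ^^ h) (Gamma m k l) lam)
             \<le> C * real l powr d * (1 + cmod lam) powr (- real h - 1)"
proof -
  have e: "0 < \<epsilon>" "\<epsilon> < 1" using assms by auto
  obtain A where A: "A \<ge> 0" and omega: "\<And>j. \<bar>omega_coeff m k j\<bar> \<le> A * real j"
    using omega_coeff_linear_bound by blast
  define d where "d = nat \<lceil>2 * A / (\<epsilon>/4)\<rceil> + 1"
  have "2 * A / (\<epsilon>/4) \<le> real (Suc d)" unfolding d_def by linarith
  hence dA: "2 * A \<le> \<epsilon> / 4 * real (Suc d)" using e by (simp add: field_simps)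
  have "real d > 0" by (simp add: d_def)
  thus ?thesis using Gamma_higher_deriv_bounds_powr[OF e A omega dA] by blast
qed

end
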